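(* Let $n\ge 1$ and let $w\in\mathbb{R}^{[n]\times[n]}$ be a real matrix. Let $(\beta_1,\dots,\beta_n)$ be the numbers $\left(\max_{j\in[n]}(w_{i,j}-w_{i,i})\right)_{i\in[n]}$ arranged in non-increasing order, i.e. $\beta_1\ge\beta_2\ge\dots\ge\beta_n$. Let $\mathbf{p}^*=(p^*_1,\dots,p^*_n)$ be the minimum subsidy vector for $w$. Then for every $r=1,2,\dots,n$, the $r$-th largest value among $p^*_1,\dots,p^*_n$ is at most $\sum_{\ell=1}^{n-r}\beta_\ell$ (an empty sum being $0$).
   Context: For a permutation $\sigma$ of $[n]=\{1,\dots,n\}$ let $P^\sigma=\{\mathbf{p}\in\mathbb{R}_{\ge0}^n \mid w_{i,\sigma(i)}+p_{\sigma(i)}\ge w_{i,j}+p_j \ \forall i,j\in[n]\}$. A permutation $\sigma$ is a maximum weight permutation for $w$ if it maximizes $\sum_{i=1}^n w_{i,\sigma(i)}$. For a maximum weight permutation $\sigma$, $P^\sigma$ is nonempty and has a unique coordinatewise-minimal element; this element does not depend on the choice of the maximum weight permutation $\sigma$, and it is called the minimum subsidy vector for $w$. (The identity permutation need not be a maximum weight permutation.) *)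

theory Defs
  imports Complex_Main "HOL-Combinatorics.Permutations"
begin

text \<open>Indices range over [n] = {1..n}. A weight matrix is w :: nat => nat => real,
  a price/subsidy vector is p :: nat => real (only values on {1..n} matter).\<close>

definition subsidy_polytope :: "nat \<Rightarrow> (nat \<Rightarrow> nat \<Rightarrow> real) \<Rightarrow> (nat \<Rightarrow> nat) \<Rightarrow> (nat \<Rightarrow> real) set" where
  "subsidy_polytope n w \<sigma> =
     {p. (\<forall>i\<in>{1..n}. 0 \<le> p i) \<and>
         (\<forall>i\<in>{1..n}. \<forall>j\<in>{1..n}. w i (\<sigma> i) + p (\<sigma> i) \<ge> w i j + p j)}"

definition max_weight_perm :: "nat \<Rightarrow> (nat \<Rightarrow> nat \<Rightarrow> real) \<Rightarrow> (nat \<Rightarrow> nat) \<Rightarrow> bool" where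
  "max_weight_perm n w \<sigma> \<longleftrightarrow> \<sigma> permutes {1..n} \<and>
     (\<forall>\<tau>. \<tau> permutes {1..n} \<longrightarrow> (\<Sum>i\<in>{1..n}. w i (\<tau> i)) \<le> (\<Sum>i\<in>{1..n}. w i (\<sigma> i)))"

definition is_min_subsidy_vector :: "nat \<Rightarrow> (nat \<Rightarrow> nat \<Rightarrow> real) \<Rightarrow> (nat \<Rightarrow> real) \<Rightarrow> bool" where
  "is_min_subsidy_vector n w p \<longleftrightarrow>
     (\<exists>\<sigma>. max_weight_perm n w \<sigma> \<and> p \<in> subsidy_polytope n w \<sigma> \<and>
        (\<forall>q\<in>subsidy_polytope n w \<sigma>. \<forall>i\<in>{1..n}. p i \<le> q i))"

definition sorted_desc_vals :: "nat \<Rightarrow> (nat \<Rightarrow> real) \<Rightarrow> real list" where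
  "sorted_desc_vals n f = rev (sort (map f [1..<n+1]))"

definition beta_val :: "nat \<Rightarrow> (nat \<Rightarrow> nat \<Rightarrow> real) \<Rightarrow> nat \<Rightarrow> real" where
  "beta_val n w i = Max ((\<lambda>j. w i j - w i i) ` {1..n})"

end

theory Submission
  imports Defs
begin

(* Let p be minimal in P^sigma for a permutation sigma. If a nonempty set U of agents is
   mapped into itself by sigma, carries positive subsidies and every i in U strictly prefers
   sigma i to every good outside U, then lowering p on U by a small amount stays in P^sigma,
   so no such U exists. With U = [n] this gives a zero coordinate; with U the agents priced
   above a threshold s >= 0 it shows that some agent a satisfies s < p a <= s + beta a.
   Starting at s = 0 and adding the beta of each agent found, after m steps at least m + 1
   coordinates are at most the sum of the m largest betas; take m = n - r. *)

lemma beta_val_ge: "j \<in> {1..n} \<Longrightarrow> w i j - w i i \<le> beta_val n w i"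
  unfolding beta_val_def by (rule Max_ge) auto

lemma beta_val_nonneg: "i \<in> {1..n} \<Longrightarrow> 0 \<le> beta_val n w i"
  using beta_val_ge[of i n w i] by simp

lemma subsidy_polytope_lower_on_invariant_set:
  assumes perm: "\<sigma> permutes {1..n}" and pP: "p \<in> subsidy_polytope n w \<sigma>"
    and U: "U \<subseteq> {1..n}" "\<sigma> ` U \<subseteq> U"
    and e: "0 \<le> e" "\<And>a. a \<in> U \<Longrightarrow> e \<le> p a"
    and slack: "\<And>i j. i \<in> U \<Longrightarrow> j \<in> {1..n} - U \<Longrightarrow> w i j + p j + e \<le> w i (\<sigma> i) + p (\<sigma> i)"
  shows "(\<lambda>k. if k \<in> U then p k - e else p k) \<in> subsidy_polytope n w \<sigma>"
proof -
  have inj: "inj \<sigma>" using perm by (rule permutes_inj)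
  have "\<sigma> ` U = U"
    using U finite_subset[OF U(1)] by (intro endo_inj_surj) (auto intro: inj_on_subset[OF inj])
  then have preimage: "i \<in> U" if "\<sigma> i \<in> U" for i
    using that inj by (metis image_iff injD)
  have pnn: "\<And>i. i \<in> {1..n} \<Longrightarrow> 0 \<le> p i"
    and con: "\<And>i j. i \<in> {1..n} \<Longrightarrow> j \<in> {1..n} \<Longrightarrow> w i j + p j \<le> w i (\<sigma> i) + p (\<sigma> i)"
    using pP unfolding subsidy_polytope_def by auto
  show ?thesis
    unfolding subsidy_polytope_def
  proof (intro CollectI conjI ballI)
    fix i assume "i \<in> {1..n}"
    then show "0 \<le> (if i \<in> U then p i - e else p i)" using pnn e(2) by auto
  next
    fix i j assume ij: "i \<in> {1..n}" "j \<in> {1..n}"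
    show "w i j + (if j \<in> U then p j - e else p j)
      \<le> w i (\<sigma> i) + (if \<sigma> i \<in> U then p (\<sigma> i) - e else p (\<sigma> i))"
      using con[OF ij] slack[of i j] preimage[of i] ij e(1) by auto
  qed
qed

lemma minimal_subsidy_no_strict_invariant_set:
  assumes perm: "\<sigma> permutes {1..n}" and pP: "p \<in> subsidy_polytope n w \<sigma>"
    and minimal: "\<forall>q\<in>subsidy_polytope n w \<sigma>. \<forall>i\<in>{1..n}. p i \<le> q i"
    and U: "U \<subseteq> {1..n}" "\<sigma> ` U \<subseteq> U"
    and pos: "\<And>a. a \<in> U \<Longrightarrow> 0 < p a"
    and slack: "\<And>i j. i \<in> U \<Longrightarrow> j \<in> {1..n} - U \<Longrightarrow> w i j + p j < w i (\<sigma> i) + p (\<sigma> i)"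
  shows "U = {}"
proof (rule ccontr)
  assume "U \<noteq> {}"
  then obtain u where u: "u \<in> U" by blast
  define E where "E = p ` U \<union> (\<lambda>(i, j). w i (\<sigma> i) + p (\<sigma> i) - w i j - p j) ` (U \<times> ({1..n} - U))"
  define e where "e = Min E"
  have finE: "finite E" unfolding E_def using finite_subset[OF U(1)] by auto
  have "\<forall>i\<in>U. \<forall>j\<in>{1..n} - U. 0 < w i (\<sigma> i) + p (\<sigma> i) - w i j - p j"
    using slack by (auto simp: algebra_simps)
  then have "0 < e"
    unfolding e_def using finE u pos by (subst Min_gr_iff) (auto simp: E_def)
  moreover have "e \<le> p a" if "a \<in> U" for a
    unfolding e_def using finE that by (intro Min_le) (auto simp: E_def)
  moreover have "w i j + p j + e \<le> w i (\<sigma> i) + p (\<sigma> i)" if "i \<in> U" "j \<in> {1..n} - U" for i j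
  proof -
    have "w i (\<sigma> i) + p (\<sigma> i) - w i j - p j \<in> E"
      unfolding E_def using that by (intro UnI2 rev_image_eqI[of "(i, j)"]) auto
    then have "e \<le> w i (\<sigma> i) + p (\<sigma> i) - w i j - p j"
      unfolding e_def using finE by (rule Min_le[rotated])
    then show ?thesis by simp
  qed
  ultimately have "(\<lambda>k. if k \<in> U then p k - e else p k) \<in> subsidy_polytope n w \<sigma>"
    using subsidy_polytope_lower_on_invariant_set[OF perm pP U] by simp
  with minimal u U(1) have "p u \<le> p u - e" by fastforce
  with \<open>0 < e\<close> show False by simp
qed

lemma minimal_subsidy_has_zero:
  assumes "n \<ge> 1" and perm: "\<sigma> permutes {1..n}" and pP: "p \<in> subsidy_polytope n w \<sigma>"
    and minimal: "\<forall>q\<in>subsidy_polytope n w \<sigma>. \<forall>i\<in>{1..n}. p i \<le> q i"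
  shows "\<exists>k\<in>{1..n}. p k = 0"
proof (rule ccontr)
  assume "\<not> ?thesis"
  moreover have "0 \<le> p a" if "a \<in> {1..n}" for a
    using pP that unfolding subsidy_polytope_def by auto
  ultimately have "\<And>a. a \<in> {1..n} \<Longrightarrow> 0 < p a"
    by (metis order_le_less)
  then have "{1..n} = ({}::nat set)"
    using permutes_image[OF perm]
    by (intro minimal_subsidy_no_strict_invariant_set[OF perm pP minimal]) auto
  with \<open>n \<ge> 1\<close> show False by simp
qed

lemma minimal_subsidy_gap_bound:
  assumes perm: "\<sigma> permutes {1..n}" and pP: "p \<in> subsidy_polytope n w \<sigma>"
    and minimal: "\<forall>q\<in>subsidy_polytope n w \<sigma>. \<forall>i\<in>{1..n}. p i \<le> q i"
    and "0 \<le> s" and "\<exists>u\<in>{1..n}. s < p u"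
  shows "\<exists>a\<in>{1..n}. s < p a \<and> p a \<le> s + beta_val n w a"
proof (rule ccontr)
  assume "\<not> ?thesis"
  then have far: "s + beta_val n w a < p a" if "a \<in> {1..n}" "s < p a" for a
    using that by force
  have con: "w i j + p j \<le> w i (\<sigma> i) + p (\<sigma> i)" if "i \<in> {1..n}" "j \<in> {1..n}" for i j
    using pP that unfolding subsidy_polytope_def by auto
  have \<sigma>_in: "\<sigma> i \<in> {1..n}" if "i \<in> {1..n}" for i
    using that by (simp only: permutes_in_image[OF perm])
  define U where "U = {a \<in> {1..n}. s < p a}"
  have "\<sigma> ` U \<subseteq> U"
  proof
    fix x assume "x \<in> \<sigma> ` U"
    then obtain a where a: "a \<in> {1..n}" "s < p a" and x: "x = \<sigma> a" by (auto simp: U_def)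
    have "p a \<le> p (\<sigma> a) + (w a (\<sigma> a) - w a a)" using con[OF a(1) a(1)] by simp
    also have "\<dots> \<le> p (\<sigma> a) + beta_val n w a" using beta_val_ge[OF \<sigma>_in[OF a(1)]] by simp
    finally show "x \<in> U" using far[OF a] \<sigma>_in[OF a(1)] x by (simp add: U_def)
  qed
  moreover have "w i j + p j < w i (\<sigma> i) + p (\<sigma> i)" if "i \<in> U" "j \<in> {1..n} - U" for i j
  proof -
    have i: "i \<in> {1..n}" "s < p i" and j: "j \<in> {1..n}" "p j \<le> s"
      using that by (auto simp: U_def)
    have "w i j + p j < w i j + p i - beta_val n w i" using far[OF i] j(2) by simp
    also have "\<dots> \<le> w i i + p i" using beta_val_ge[OF j(1), of w i] by simp
    also have "\<dots> \<le> w i (\<sigma> i) + p (\<sigma> i)" using con[OF i(1) i(1)] .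
    finally show ?thesis .
  qed
  ultimately have "U = {}"
    using \<open>0 \<le> s\<close>
    by (intro minimal_subsidy_no_strict_invariant_set[OF perm pP minimal]) (auto simp: U_def)
  with \<open>\<exists>u\<in>{1..n}. s < p u\<close> show False by (auto simp: U_def)
qed

lemma exists_small_set_sum_bounds_many:
  fixes p b :: "'a \<Rightarrow> real"
  assumes I: "finite I" and zero: "\<exists>k\<in>I. p k \<le> 0"
    and gap: "\<And>s. 0 \<le> s \<Longrightarrow> \<exists>u\<in>I. s < p u \<Longrightarrow> \<exists>a\<in>I. s < p a \<and> p a \<le> s + b a"
    and b_nonneg: "\<And>a. a \<in> I \<Longrightarrow> 0 \<le> b a"
  shows "m < card I \<Longrightarrow>
    \<exists>A\<subseteq>I. card A \<le> m \<and> A \<subseteq> {k\<in>I. p k \<le> sum b A} \<and> m < card {k\<in>I. p k \<le> sum b A}"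
proof (induction m)
  case 0
  from zero have "{k\<in>I. p k \<le> sum b {}} \<noteq> {}" by auto
  then show ?case using I by (intro exI[of _ "{}"]) (auto simp: card_gt_0_iff)
next
  case (Suc m)
  then obtain A where A: "A \<subseteq> I" "card A \<le> m" "A \<subseteq> {k\<in>I. p k \<le> sum b A}"
    and m_less: "m < card {k\<in>I. p k \<le> sum b A}"
    by auto
  define s where "s = sum b A"
  define D where "D = {k\<in>I. p k \<le> s}"
  show ?case
  proof (cases "Suc m < card D")
    case True
    then show ?thesis using A unfolding D_def s_def by (intro exI[of _ A]) simp
  next
    case False
    with m_less have card_D: "card D = Suc m" by (simp add: s_def D_def)
    with Suc.prems have "D \<noteq> I" by auto
    then have "\<exists>u\<in>I. s < p u" by (force simp: D_def)
    moreover have "0 \<le> s" unfolding s_def using A(1) b_nonneg by (auto intro: sum_nonneg)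
    ultimately obtain a where a: "a \<in> I" "s < p a" "p a \<le> s + b a" using gap by blast
    have "a \<notin> D" using a(2) by (simp add: D_def)
    then have "a \<notin> A" using A(3) by (auto simp: D_def s_def)
    have fin_A: "finite A" using A(1) I by (rule finite_subset)
    have sum_A': "sum b (insert a A) = s + b a"
      using \<open>a \<notin> A\<close> fin_A by (simp add: s_def)
    define D' where "D' = {k\<in>I. p k \<le> sum b (insert a A)}"
    have "insert a D \<subseteq> D'"
      using a b_nonneg[OF a(1)] sum_A' by (auto simp: D_def D'_def)
    then have "card (insert a D) \<le> card D'"
      using I by (intro card_mono) (auto simp: D'_def)
    moreover have "card (insert a D) = Suc (Suc m)"
      using \<open>a \<notin> D\<close> card_D I by (simp add: D_def)
    moreover have "insert a A \<subseteq> D'"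
      using A(3) a b_nonneg[OF a(1)] sum_A' by (auto simp: D'_def s_def)
    moreover have "card (insert a A) \<le> Suc m"
      using \<open>a \<notin> A\<close> fin_A A(2) by simp
    ultimately show ?thesis
      using A(1) a(1) unfolding D'_def by (intro exI[of _ "insert a A"]) auto
  qed
qed

lemma sorted_desc_vals_nth_le:
  assumes r: "r \<in> {1..n}" and many_below: "n - r < card {k\<in>{1..n}. f k \<le> c}"
  shows "sorted_desc_vals n f ! (r - 1) \<le> c"
proof (rule ccontr)
  assume "\<not> ?thesis"
  define ys where "ys = sort (map f [1..<n+1])"
  have len: "length ys = n" and "sorted ys" by (simp_all add: ys_def)
  have "sorted_desc_vals n f ! (r - 1) = ys ! (n - r)"
    unfolding sorted_desc_vals_def ys_def[symmetric] using r len by (subst rev_nth) auto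
  with \<open>\<not> ?thesis\<close> have above: "c < ys ! (n - r)" by simp
  have "card {k\<in>{1..n}. f k \<le> c} = length (filter (\<lambda>k. f k \<le> c) [1..<n+1])"
    by (subst distinct_card[symmetric]) (auto intro!: arg_cong[where f=card])
  also have "\<dots> = length (filter (\<lambda>x. x \<le> c) ys)"
    unfolding ys_def by (simp add: filter_sort filter_map o_def)
  also have "\<dots> = card {i. i < length ys \<and> ys ! i \<le> c}"
    by (rule length_filter_conv_card)
  also have "\<dots> \<le> card {..<n - r}"
  proof (intro card_mono subsetI)
    fix i assume i: "i \<in> {i. i < length ys \<and> ys ! i \<le> c}"
    show "i \<in> {..<n - r}"
    proof (rule ccontr)
      assume "i \<notin> {..<n - r}"
      then have "ys ! (n - r) \<le> ys ! i"
        using i \<open>sorted ys\<close> by (auto intro!: sorted_nth_mono)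
      with i above show False by auto
    qed
  qed simp
  finally show False using many_below by simp
qed

lemma map_insort_key: "map f (insort_key f x xs) = insort (f x) (map f xs)"
  by (induction xs) auto

lemma map_sort_key: "map f (sort_key f xs) = sort (map f xs)"
  by (induction xs) (auto simp: map_insort_key)

lemma sorted_desc_vals_top_set:
  assumes "m \<le> n"
  obtains T where "T \<subseteq> {1..n}" "card T = m"
    "\<And>x y. x \<in> {1..n} - T \<Longrightarrow> y \<in> T \<Longrightarrow> b x \<le> b y"
    "sum b T = (\<Sum>l = 1..m. sorted_desc_vals n b ! (l - 1))"
proof
  define K where "K = rev (sort_key b [1..<n+1])"
  define T where "T = (!) K ` {..<m}"
  have map_K: "map b K = sorted_desc_vals n b"
    unfolding K_def sorted_desc_vals_def by (simp del: upt_Suc add: rev_map[symmetric] map_sort_key)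
  have len_K: "length K = n" and set_K: "set K = {1..n}" by (auto simp: K_def)
  have "sorted (rev (map b K))" unfolding K_def by (simp add: rev_map[symmetric])
  then have K_antimono: "b (K ! j) \<le> b (K ! i)" if "i \<le> j" "j < n" for i j
    using sorted_rev_nth_mono[of "map b K" i j] that len_K by simp
  have inj: "inj_on ((!) K) {..<m}"
    using \<open>m \<le> n\<close> len_K by (intro inj_on_nth) (auto simp: K_def)
  have "K ! i \<in> {1..n}" if "i < m" for i
    using nth_mem[of i K] that len_K set_K \<open>m \<le> n\<close> by simp
  then show "T \<subseteq> {1..n}" unfolding T_def by blast
  show "card T = m" unfolding T_def using card_image[OF inj] by simp
  show "b x \<le> b y" if x: "x \<in> {1..n} - T" and y: "y \<in> T" for x y
  proof -
    obtain i where i: "i < m" "y = K ! i" using y unfolding T_def by auto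
    have "x \<in> set K" using x set_K by blast
    then obtain j where j: "j < n" "x = K ! j" using len_K by (auto simp: in_set_conv_nth)
    have "\<not> j < m" using x j unfolding T_def by auto
    then show ?thesis using K_antimono[of i j] i j by simp
  qed
  have "(\<Sum>l = 1..m. sorted_desc_vals n b ! (l - 1)) = (\<Sum>i<m. sorted_desc_vals n b ! i)"
    by (simp add: sum.atLeast1_atMost_eq)
  also have "\<dots> = (\<Sum>i<m. b (K ! i))"
    using len_K \<open>m \<le> n\<close> by (intro sum.cong) (auto simp: map_K[symmetric])
  also have "\<dots> = sum b T" unfolding T_def by (simp add: sum.reindex[OF inj])
  finally show "sum b T = (\<Sum>l = 1..m. sorted_desc_vals n b ! (l - 1))" ..
qed

lemma sum_le_sum_dominating_set:
  fixes b :: "'a \<Rightarrow> 'b::linordered_idom"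
  assumes fin: "finite A" "finite T" and card_le: "card A \<le> card T"
    and nonneg: "\<And>y. y \<in> T \<Longrightarrow> 0 \<le> b y"
    and dominated: "\<And>x y. x \<in> A - T \<Longrightarrow> y \<in> T \<Longrightarrow> b x \<le> b y"
  shows "sum b A \<le> sum b T"
proof -
  have card_diff: "card (A - T) \<le> card (T - A)"
    using card_le fin by (metis Int_commute card_Int_Diff add_le_cancel_left)
  have "sum b (A - T) \<le> sum b (T - A)"
  proof (cases "T - A = {}")
    case True
    with card_diff have "card (A - T) = 0" by simp
    with fin have "A - T = {}" by simp
    with True show ?thesis by simp
  next
    case False
    define c where "c = Min (b ` (T - A))"
    have c_in: "c \<in> b ` (T - A)" unfolding c_def using fin False by (intro Min_in) auto
    have "sum b (A - T) \<le> of_nat (card (A - T)) * c"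
      using sum_bounded_above[of "A - T" b c] c_in dominated by force
    also have "\<dots> \<le> of_nat (card (T - A)) * c"
      using card_diff c_in nonneg by (intro mult_right_mono) auto
    also have "\<dots> \<le> sum b (T - A)"
      using sum_bounded_below[of "T - A" c b] fin unfolding c_def by simp
    finally show ?thesis .
  qed
  then show ?thesis
    using fin by (metis Int_commute add_left_mono sum.Int_Diff)
qed

lemma sum_le_sum_sorted_desc_vals:
  fixes b :: "nat \<Rightarrow> real"
  assumes A: "A \<subseteq> {1..n}" "card A \<le> m" and "m \<le> n"
    and nonneg: "\<And>a. a \<in> {1..n} \<Longrightarrow> 0 \<le> b a"
  shows "sum b A \<le> (\<Sum>l = 1..m. sorted_desc_vals n b ! (l - 1))"
proof -
  obtain T where T: "T \<subseteq> {1..n}" "card T = m"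
    "\<And>x y. x \<in> {1..n} - T \<Longrightarrow> y \<in> T \<Longrightarrow> b x \<le> b y"
    "sum b T = (\<Sum>l = 1..m. sorted_desc_vals n b ! (l - 1))"
    using sorted_desc_vals_top_set[OF \<open>m \<le> n\<close>] by blast
  have "sum b A \<le> sum b T"
    using A T(1-3) nonneg
    by (intro sum_le_sum_dominating_set) (auto intro: finite_subset)
  with T(4) show ?thesis by simp
qed

theorem lemma3:
  fixes n :: nat and w :: "nat \<Rightarrow> nat \<Rightarrow> real" and p :: "nat \<Rightarrow> real"
  assumes "n \<ge> 1"
    and "is_min_subsidy_vector n w p"
  shows "\<forall>r\<in>{1..n}. sorted_desc_vals n p ! (r - 1)
           \<le> (\<Sum>l = 1..n - r. sorted_desc_vals n (beta_val n w) ! (l - 1))"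
proof
  fix r assume r: "r \<in> {1..n}"
  obtain \<sigma> where "max_weight_perm n w \<sigma>" and pP: "p \<in> subsidy_polytope n w \<sigma>"
    and minimal: "\<forall>q\<in>subsidy_polytope n w \<sigma>. \<forall>i\<in>{1..n}. p i \<le> q i"
    using assms(2) unfolding is_min_subsidy_vector_def by blast
  then have perm: "\<sigma> permutes {1..n}" unfolding max_weight_perm_def by blast
  define S where "S = (\<Sum>l = 1..n - r. sorted_desc_vals n (beta_val n w) ! (l - 1))"
  have "\<exists>k\<in>{1..n}. p k \<le> 0"
    using minimal_subsidy_has_zero[OF assms(1) perm pP minimal] by force
  then obtain A where A: "A \<subseteq> {1..n}" "card A \<le> n - r"
    and many_below: "n - r < card {k\<in>{1..n}. p k \<le> sum (beta_val n w) A}"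
    using exists_small_set_sum_bounds_many[OF finite_atLeastAtMost _
        minimal_subsidy_gap_bound[OF perm pP minimal] beta_val_nonneg, of "n - r"] r
    by auto
  have "sum (beta_val n w) A \<le> S"
    unfolding S_def using A beta_val_nonneg by (intro sum_le_sum_sorted_desc_vals) auto
  then have "card {k\<in>{1..n}. p k \<le> sum (beta_val n w) A} \<le> card {k\<in>{1..n}. p k \<le> S}"
    by (intro card_mono) auto
  with many_below have "n - r < card {k\<in>{1..n}. p k \<le> S}" by linarith
  then show "sorted_desc_vals n p ! (r - 1)
      \<le> (\<Sum>l = 1..n - r. sorted_desc_vals n (beta_val n w) ! (l - 1))"
    unfolding S_def by (rule sorted_desc_vals_nth_le[OF r])
qed

end
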